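(* Let $p$ be prime, let $c_1,\dots,c_k$ be positive integers, and let $v\ge2$ be an integer coprime to $p$. There exist a collection of $v$-adic intervals $\{I_\ell\}_{\ell\ge1}$ in $[0,1)$ and positive integers $\alpha_\ell$ such that: (1) for each $i\in\{1,\dots,k\}$, letting $J^i_\ell$ be the smallest $pc_i$-adic interval containing $I_\ell$, the intervals $\{J^i_\ell\}_{\ell\ge1}$ are pairwise disjoint and contained in $[0,1)$; in particular the $I_\ell$ are pairwise disjoint; (2) for each $\alpha\in\mathbb{N}$ there are only finitely many $\ell$ with $\alpha_\ell=\alpha$; (3) for each $\ell\ge1$ and each $i$, there is a point $\zeta(J^i_\ell)$ which is an interior endpoint of some $pc_i$-adic child of $J^i_\ell$ such that $$0<\zeta(J^i_\ell)-Z(I_\ell)\le v^{-100\alpha_\ell}|I_\ell|.$$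
   Context: For a positive integer $N$, the $N$-adic intervals are $[\frac{k-1}{N^s},\frac{k}{N^s})$, $s,k\in\mathbb{Z}$, with $N$-adic children the $N$ equal-length subintervals $[\frac{k-1}{N^s}+\frac{j-1}{N^{s+1}},\frac{k-1}{N^s}+\frac{j}{N^{s+1}})$, $1\le j\le N$. For a $v$-adic interval $I=[\frac{k-1}{v^s},\frac{k}{v^s})$, $Z(I)=\frac{k-1}{v^s}+\frac{v-1}{v^{s+1}}$ is the left endpoint of its last $v$-adic child. An interior endpoint of a child of $J$ is an endpoint of that child lying in the interior of $J$. $|I|$ is the length of $I$. *)

theory Defs
  imports "HOL-Analysis.Analysis"
begin

definition adic_interval :: "nat \<Rightarrow> int \<Rightarrow> int \<Rightarrow> real set" where
  "adic_interval N s k = {real_of_int (k - 1) / real N powi s ..< real_of_int k / real N powi s}"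

definition is_adic :: "nat \<Rightarrow> real set \<Rightarrow> bool" where
  "is_adic N I \<longleftrightarrow> (\<exists>s k. I = adic_interval N s k)"

definition smallest_adic :: "nat \<Rightarrow> real set \<Rightarrow> real set" where
  "smallest_adic N I = (THE J. is_adic N J \<and> I \<subseteq> J \<and>
       (\<forall>J'. is_adic N J' \<and> I \<subseteq> J' \<longrightarrow> J \<subseteq> J'))"

definition adic_children :: "nat \<Rightarrow> real set \<Rightarrow> real set set" where
  "adic_children N J = {C. \<exists>s k (j::int). J = adic_interval N s k \<and> 1 \<le> j \<and> j \<le> int N \<and>
      C = {real_of_int (k - 1) / real N powi s + real_of_int (j - 1) / real N powi (s + 1)
           ..< real_of_int (k - 1) / real N powi s + real_of_int j / real N powi (s + 1)}}"

definition interior_child_endpoint :: "nat \<Rightarrow> real set \<Rightarrow> real \<Rightarrow> bool" where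
  "interior_child_endpoint N J z \<longleftrightarrow>
     (\<exists>C \<in> adic_children N J. (z = Inf C \<or> z = Sup C) \<and> z \<in> interior J)"

text \<open>Z(I): left endpoint of the last v-adic child of the v-adic interval I.\<close>
definition Zpt :: "nat \<Rightarrow> real set \<Rightarrow> real" where
  "Zpt v I = (THE z. \<exists>s k. I = adic_interval v s k \<and>
       z = real_of_int (k - 1) / real v powi s + (real v - 1) / real v powi (s + 1))"

definition ilen :: "real set \<Rightarrow> real" where
  "ilen I = Sup I - Inf I"

end

theory Submission
  imports Defs "HOL-Number_Theory.Number_Theory"
begin

text \<open>For each level l we work in a window W_l, the cell of the grid p^-\<rho>\<int> just above (v - 1)/v,
  with \<rho> = \<rho>_l growing so fast that the windows are pairwise disjoint subintervals of [0,1).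
  Let q be the point of a much finer grid p^-r\<int> just right of the left end of W_l. By Euler's
  theorem some power V = v^s \<equiv> 1 (mod p^r) exceeds every (p c_i)^r; then q (V - 1) is an integer,
  so I_l = [q - q/V, q - q/V + 1/V) is a v-adic interval. It contains q, and
  q - Z(I_l) = (q - (v - 1)/v) |I_l| is small because q is close to (v - 1)/v. Since I_l is
  shorter than the spacing of the grid (p c_i)^-r\<int>, on which q lies, q is the right endpoint of
  a child of the smallest p c_i-adic interval containing I_l, and that interval lies in the
  p c_i-adic cell of level \<rho>_l at the left end of W_l. Finally \<alpha>_l = l.\<close>

section \<open>N-adic intervals and cells\<close>

lemma mem_adic_interval_iff_floor:
  assumes "N > 0"
  shows "z \<in> adic_interval N s k \<longleftrightarrow> \<lfloor>z * real N powi s\<rfloor> = k - 1"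
  using assms by (simp add: adic_interval_def floor_eq_iff pos_divide_le_eq pos_less_divide_eq)

lemma floor_mult_powi_div:
  assumes "N > 0" "s \<le> s'"
  shows "\<lfloor>z * real N powi s\<rfloor> = \<lfloor>z * real N powi s'\<rfloor> div int N ^ nat (s' - s)"
proof -
  have "real N powi s' = real N powi s * real N powi (s' - s)"
    using assms(1) by (simp flip: power_int_add)
  also have "real N powi (s' - s) = real_of_int (int N ^ nat (s' - s))"
    using assms(2) by (simp add: power_int_def)
  finally have "z * real N powi s = z * real N powi s' / real_of_int (int N ^ nat (s' - s))"
    using assms(1) by simp
  then show ?thesis
    using floor_divide_real_eq_div[of "int N ^ nat (s' - s)" "z * real N powi s'"] by simp
qed

lemma adic_interval_nested:
  assumes "N > 0" "x \<in> adic_interval N s k" "x \<in> adic_interval N s' k'" "s \<le> s'"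
  shows "adic_interval N s' k' \<subseteq> adic_interval N s k"
  using assms floor_mult_powi_div[OF assms(1,4)] by (auto simp: mem_adic_interval_iff_floor)

lemma adic_interval_bounds:
  assumes "N > 0"
  shows "Inf (adic_interval N s k) = real_of_int (k - 1) / real N powi s"
    and "Sup (adic_interval N s k) = real_of_int k / real N powi s"
    and "ilen (adic_interval N s k) = 1 / real N powi s"
proof -
  have "real_of_int (k - 1) / real N powi s < real_of_int k / real N powi s"
    using assms by (simp add: divide_strict_right_mono)
  then show "Inf (adic_interval N s k) = real_of_int (k - 1) / real N powi s"
    and "Sup (adic_interval N s k) = real_of_int k / real N powi s"
    and "ilen (adic_interval N s k) = 1 / real N powi s"
    by (simp_all add: adic_interval_def ilen_def diff_divide_distrib[symmetric])
qed

lemma Zpt_adic_interval: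
  assumes "v > 0" "I = adic_interval v s k"
  shows "Zpt v I = Sup I - ilen I / real v"
  unfolding Zpt_def
proof (rule the_equality)
  have "real_of_int (k' - 1) / real v powi s' + (real v - 1) / real v powi (s' + 1)
      = Sup (adic_interval v s' k') - ilen (adic_interval v s' k') / real v" for s' k'
    using assms(1) by (simp add: adic_interval_bounds power_int_add field_simps)
  then show "\<exists>s' k'. I = adic_interval v s' k' \<and> Sup I - ilen I / real v =
      real_of_int (k' - 1) / real v powi s' + (real v - 1) / real v powi (s' + 1)"
    and "\<And>z. \<exists>s' k'. I = adic_interval v s' k' \<and>
      z = real_of_int (k' - 1) / real v powi s' + (real v - 1) / real v powi (s' + 1) \<Longrightarrow>
      z = Sup I - ilen I / real v"
    using assms(2) by auto
qed

lemma smallest_adic_eqI: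
  assumes "is_adic N J" "A \<subseteq> J" "\<And>J'. is_adic N J' \<Longrightarrow> A \<subseteq> J' \<Longrightarrow> J \<subseteq> J'"
  shows "smallest_adic N A = J"
  unfolding smallest_adic_def by (rule the_equality) (use assms in blast)+

definition adic_cell :: "nat \<Rightarrow> nat \<Rightarrow> real \<Rightarrow> real set" where
  "adic_cell N t x = adic_interval N (int t) (\<lfloor>x * real N ^ t\<rfloor> + 1)"

lemma adic_cell_eq:
  "adic_cell N t x = {\<lfloor>x * real N ^ t\<rfloor> / real N ^ t ..< (\<lfloor>x * real N ^ t\<rfloor> + 1) / real N ^ t}"
  by (simp add: adic_cell_def adic_interval_def power_int_of_nat)

lemma is_adic_adic_cell: "is_adic N (adic_cell N t x)"
  unfolding adic_cell_def is_adic_def by blast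

lemma mem_adic_cell: "N > 0 \<Longrightarrow> x \<in> adic_cell N t x"
  by (simp add: adic_cell_def mem_adic_interval_iff_floor power_int_of_nat)

lemma Sup_adic_cell: "N > 0 \<Longrightarrow> Sup (adic_cell N t x) = (\<lfloor>x * real N ^ t\<rfloor> + 1) / real N ^ t"
  by (simp add: adic_cell_def adic_interval_bounds power_int_of_nat)

lemma adic_cell_0:
  assumes "0 \<le> x" "x < 1"
  shows "adic_cell N 0 x = {0..<1}"
proof -
  have "\<lfloor>x\<rfloor> = 0" using assms by (simp add: floor_eq_iff)
  then show ?thesis by (simp add: adic_cell_eq)
qed

lemma adic_cell_grid_point_le:
  assumes "N > 0" "z \<in> adic_cell N t x" "z * real N ^ t \<in> \<int>"
  shows "z \<le> x"
proof -
  from assms(3) obtain n where n: "z * real N ^ t = of_int n" by (auto elim: Ints_cases)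
  with assms(1,2) have "n = \<lfloor>x * real N ^ t\<rfloor>"
    by (simp add: adic_cell_def mem_adic_interval_iff_floor power_int_of_nat)
  then have "z * real N ^ t \<le> x * real N ^ t" using n by linarith
  with assms(1) show ?thesis by simp
qed

lemma adic_cell_Suc_mem_children:
  assumes "N > 0"
  shows "adic_cell N (Suc t) x \<in> adic_children N (adic_cell N t x)"
proof -
  define u where "u = \<lfloor>x * real N ^ Suc t\<rfloor>"
  have "\<lfloor>x * real N ^ t\<rfloor> = u div int N"
    using floor_mult_powi_div[OF assms, of "int t" "int (Suc t)" x]
    unfolding power_int_of_nat by (simp add: u_def)
  then have u: "u = int N * \<lfloor>x * real N ^ t\<rfloor> + u mod int N" by simp
  define k where "k = \<lfloor>x * real N ^ t\<rfloor> + 1"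
  define j where "j = u mod int N + 1"
  have "0 \<le> u mod int N" "u mod int N < int N" using assms by simp_all
  then have "1 \<le> j" "j \<le> int N" unfolding j_def by linarith+
  moreover have "adic_cell N (Suc t) x =
      {real_of_int (k - 1) / real N powi int t + real_of_int (j - 1) / real N powi (int t + 1)
       ..< real_of_int (k - 1) / real N powi int t + real_of_int j / real N powi (int t + 1)}"
  proof -
    have "real N powi (int t + 1) = real N ^ t * real N"
      using power_int_of_nat[of "real N" "Suc t"] by (simp add: add.commute)
    moreover have "real_of_int u = real N * \<lfloor>x * real N ^ t\<rfloor> + real_of_int (u mod int N)"
      using arg_cong[OF u, of real_of_int] by simp
    ultimately show ?thesis
      using assms unfolding adic_cell_eq u_def[symmetric] j_def k_def
      by (simp add: power_int_of_nat field_simps)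
  qed
  ultimately show ?thesis
    unfolding adic_children_def adic_cell_def[of N t] k_def[symmetric] by blast
qed

section \<open>Smallest N-adic covers\<close>

lemma adic_cell_subset_cover:
  assumes "N > 0" "x < y" "\<not> {x..<y} \<subseteq> adic_cell N (Suc t) x" "is_adic N J" "{x..<y} \<subseteq> J"
  shows "adic_cell N t x \<subseteq> J"
proof -
  obtain s k where J: "J = adic_interval N s k" using assms(4) unfolding is_adic_def by blast
  have xJ: "x \<in> adic_interval N s k" using assms(2,5) J by auto
  have x_cell: "x \<in> adic_interval N (int t') (\<lfloor>x * real N ^ t'\<rfloor> + 1)" for t'
    using mem_adic_cell[OF assms(1)] unfolding adic_cell_def .
  show ?thesis
  proof (cases "s \<le> int t")
    case True
    then show ?thesis
      using adic_interval_nested[OF assms(1) xJ x_cell] unfolding adic_cell_def J by simp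
  next
    case False
    then have "J \<subseteq> adic_cell N (Suc t) x"
      using adic_interval_nested[OF assms(1) x_cell[of "Suc t"] xJ] unfolding adic_cell_def J by simp
    with assms(3,5) show ?thesis by blast
  qed
qed

lemma atLeastLessThan_subset_adic_cell_length:
  assumes "N > 0" "x < y" "{x..<y} \<subseteq> adic_cell N t x"
  shows "y - x \<le> 1 / real N ^ t"
proof -
  have "\<lfloor>x * real N ^ t\<rfloor> / real N ^ t \<le> x" "y \<le> (\<lfloor>x * real N ^ t\<rfloor> + 1) / real N ^ t"
    using atLeastLessThan_subset_iff[OF assms(3)[unfolded adic_cell_eq]] assms(2) by auto
  then show ?thesis by (simp add: add_divide_distrib)
qed

lemma smallest_adic_atLeastLessThan:
  assumes "N \<ge> 2" "0 \<le> x" "x < y" "y \<le> 1"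
  obtains t where "smallest_adic N {x..<y} = adic_cell N t x"
    and "{x..<y} \<subseteq> adic_cell N t x" and "\<not> {x..<y} \<subseteq> adic_cell N (Suc t) x"
proof -
  have N: "N > 0" "1 < real N" using assms(1) by auto
  define covers where "covers t \<longleftrightarrow> {x..<y} \<subseteq> adic_cell N t x" for t
  have "covers 0" using assms by (simp add: covers_def adic_cell_0)
  obtain b where b: "1 / (y - x) < real N ^ b" using real_arch_pow[OF N(2)] by blast
  have "t < b" if "covers t" for t
  proof (rule power_less_imp_less_exp[OF N(2)])
    have "y - x \<le> 1 / real N ^ t"
      using atLeastLessThan_subset_adic_cell_length N(1) assms(3) that unfolding covers_def by blast
    then have "real N ^ t * (y - x) \<le> 1"
      using N(1) by (simp add: pos_le_divide_eq mult.commute)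
    then have "real N ^ t \<le> 1 / (y - x)"
      using assms(3) by (simp add: pos_le_divide_eq)
    with b show "real N ^ t < real N ^ b" by linarith
  qed
  then obtain t where t: "covers t" "\<And>t'. covers t' \<Longrightarrow> t' \<le> t"
    using Nat.ex_has_greatest_nat[of covers 0 b] \<open>covers 0\<close> by (metis less_imp_le)
  then have "\<not> covers (Suc t)" by fastforce
  moreover have "smallest_adic N {x..<y} = adic_cell N t x"
    using t(1) calculation adic_cell_subset_cover[OF N(1) assms(3)]
    by (intro smallest_adic_eqI is_adic_adic_cell) (auto simp: covers_def)
  ultimately show ?thesis using that t(1) unfolding covers_def by blast
qed

lemma smallest_adic_subset:
  assumes "N \<ge> 2" "0 \<le> x" "x < y" "y \<le> 1" "is_adic N R" "{x..<y} \<subseteq> R"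
  shows "smallest_adic N {x..<y} \<subseteq> R"
proof -
  obtain t where "smallest_adic N {x..<y} = adic_cell N t x" "\<not> {x..<y} \<subseteq> adic_cell N (Suc t) x"
    using smallest_adic_atLeastLessThan[OF assms(1-4)] by metis
  with assms show ?thesis using adic_cell_subset_cover[of N x y t R] by simp
qed

lemma grid_point_finer:
  assumes "q * real N ^ r \<in> \<int>" "r \<le> t"
  shows "q * real N ^ t \<in> \<int>"
proof -
  have "q * real N ^ t = q * real N ^ r * real N ^ (t - r)"
    using assms(2) by (simp add: mult.assoc flip: power_add)
  then show ?thesis using assms(1) by (metis Ints_mult Ints_power Ints_of_nat)
qed

lemma grid_points_eq:
  assumes "N > 0" "a * real N ^ r \<in> \<int>" "b * real N ^ r \<in> \<int>" "\<bar>a - b\<bar> * real N ^ r < 1"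
  shows "a = b"
proof -
  obtain m n where "a * real N ^ r = of_int m" "b * real N ^ r = of_int n"
    using assms(2,3) by (auto elim!: Ints_cases)
  moreover from this have "(a - b) * real N ^ r = of_int (m - n)"
    by (simp add: left_diff_distrib)
  then have "\<bar>real_of_int (m - n)\<bar> = \<bar>a - b\<bar> * real N ^ r"
    by (metis abs_mult abs_of_nonneg of_nat_0_le_iff of_nat_power)
  with assms(4) have "\<bar>real_of_int (m - n)\<bar> < 1" by simp
  then have "m = n" by linarith
  ultimately have "a * real N ^ r = b * real N ^ r" by simp
  then show ?thesis using assms(1) by simp
qed

lemma Sup_adic_cell_Suc_between:
  assumes "N > 0" "x < y" "{x..<y} \<subseteq> adic_cell N t x" "\<not> {x..<y} \<subseteq> adic_cell N (Suc t) x"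
  shows "x < Sup (adic_cell N (Suc t) x)" and "Sup (adic_cell N (Suc t) x) < y"
    and "Sup (adic_cell N (Suc t) x) \<in> interior (adic_cell N t x)"
proof -
  obtain a b where J: "adic_cell N t x = {a..<b}" using adic_cell_eq by blast
  obtain a' b' where C: "adic_cell N (Suc t) x = {a'..<b'}" using adic_cell_eq by blast
  have "a' \<le> x" "x < b'" using mem_adic_cell[OF assms(1), where t = "Suc t" and x = x] C by auto
  moreover obtain z where "z \<in> {x..<y}" "z \<notin> {a'..<b'}" using assms(4) C by blast
  moreover have "a \<le> x" "y \<le> b" using atLeastLessThan_subset_iff[OF assms(3)[unfolded J]] assms(2) by auto
  ultimately show "x < Sup (adic_cell N (Suc t) x)" and "Sup (adic_cell N (Suc t) x) < y"
    and "Sup (adic_cell N (Suc t) x) \<in> interior (adic_cell N t x)"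
    unfolding J C by auto
qed

text \<open>The right end of the child containing x lies strictly between x and y and, as t < r, on the
  grid N^-r\<int>; two grid points closer than the grid spacing coincide.\<close>
lemma interior_child_endpoint_smallest_adic:
  assumes "N \<ge> 2" "0 \<le> x" "x < q" "q < y" "y \<le> 1"
    and "q * real N ^ r \<in> \<int>" "(y - x) * real N ^ r < 1"
  shows "interior_child_endpoint N (smallest_adic N {x..<y}) q"
proof -
  have N: "N > 0" using assms(1) by simp
  obtain t where J: "smallest_adic N {x..<y} = adic_cell N t x"
    and cover: "{x..<y} \<subseteq> adic_cell N t x" and not_cover: "\<not> {x..<y} \<subseteq> adic_cell N (Suc t) x"
    using smallest_adic_atLeastLessThan[OF assms(1,2) _ assms(5)] assms(3,4) by (metis order.strict_trans)
  define e where "e = Sup (adic_cell N (Suc t) x)"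
  have e: "x < e" "e < y" "e \<in> interior (adic_cell N t x)"
    using Sup_adic_cell_Suc_between[OF N _ cover not_cover] assms(3,4) unfolding e_def by auto
  have "t < r"
  proof (rule ccontr)
    assume "\<not> t < r"
    then have "q * real N ^ t \<in> \<int>" using grid_point_finer[OF assms(6)] by simp
    moreover have "q \<in> adic_cell N t x" using cover assms(3,4) by auto
    ultimately show False using adic_cell_grid_point_le[OF N] assms(3) by fastforce
  qed
  then have "e * real N ^ r \<in> \<int>"
    using grid_point_finer[of e N "Suc t" r] N by (simp add: e_def Sup_adic_cell)
  moreover have "\<bar>e - q\<bar> < y - x" using e(1,2) assms(3,4) by linarith
  then have "\<bar>e - q\<bar> * real N ^ r < (y - x) * real N ^ r"
    using N by (intro mult_strict_right_mono) simp_all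
  then have "\<bar>e - q\<bar> * real N ^ r < 1" using assms(7) by linarith
  ultimately have "e = q" using grid_points_eq[OF N _ assms(6)] by blast
  then show ?thesis
    using adic_cell_Suc_mem_children[OF N, of t x] e(3)
    unfolding interior_child_endpoint_def J e_def by blast
qed

lemma grid_point_dvd:
  assumes "p dvd N" "y * real p ^ \<rho> \<in> \<int>"
  shows "y * real N ^ \<rho> \<in> \<int>"
proof -
  obtain c where "N = p * c" using assms(1) by (auto elim: dvdE)
  then have "y * real N ^ \<rho> = y * real p ^ \<rho> * real c ^ \<rho>"
    by (simp add: power_mult_distrib mult.assoc)
  then show ?thesis using assms(2) by (metis Ints_mult Ints_power Ints_of_nat)
qed

lemma smallest_adic_grid_interval:
  assumes "N \<ge> 2" "y * real N ^ \<rho> \<in> \<int>" "q * real N ^ r \<in> \<int>"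
    and "0 \<le> y" "y \<le> x" "x < q" "q < z" "z \<le> y + 1 / real N ^ \<rho>" "y + 1 / real N ^ \<rho> \<le> 1"
    and "(z - x) * real N ^ r < 1"
  shows "smallest_adic N {x..<z} \<subseteq> {y..<y + 1 / real N ^ \<rho>}"
    and "interior_child_endpoint N (smallest_adic N {x..<z}) q"
proof -
  obtain n where n: "y * real N ^ \<rho> = of_int n" using assms(2) by (auto elim: Ints_cases)
  have "{y..<y + 1 / real N ^ \<rho>} = adic_interval N (int \<rho>) (n + 1)"
    using assms(1) n[symmetric] by (simp add: adic_interval_def power_int_of_nat add_divide_distrib)
  then have "is_adic N {y..<y + 1 / real N ^ \<rho>}" unfolding is_adic_def by blast
  with assms show "smallest_adic N {x..<z} \<subseteq> {y..<y + 1 / real N ^ \<rho>}"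
    by (intro smallest_adic_subset) auto
  show "interior_child_endpoint N (smallest_adic N {x..<z}) q"
    using assms by (intro interior_child_endpoint_smallest_adic) auto
qed

section \<open>v-adic intervals around grid points\<close>

lemma ilen_atLeastLessThan: "a < b \<Longrightarrow> ilen {a..<b} = b - a"
  by (simp add: ilen_def)

lemma Zpt_atLeastLessThan:
  assumes "v > 0" "d > 0" "is_adic v {x..<x + d}"
  shows "Zpt v {x..<x + d} = x + d - d / real v"
proof -
  obtain s k where "{x..<x + d} = adic_interval v s k" using assms(3) unfolding is_adic_def by blast
  then have "Zpt v {x..<x + d} = Sup {x..<x + d} - ilen {x..<x + d} / real v"
    by (rule Zpt_adic_interval[OF assms(1)])
  then show ?thesis using assms(2) by (simp add: ilen_atLeastLessThan)
qed

lemma exists_power_cong_one_gt: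
  fixes v m B :: nat
  assumes "v \<ge> 2" "coprime v m"
  obtains s where "B < v ^ s" "m dvd v ^ s - 1"
proof
  have "m \<noteq> 0" using assms by (intro notI) simp
  then have "v \<le> v ^ totient m" using assms(1) by (simp add: self_le_power)
  have "B < 2 ^ B" by (rule less_exp)
  also have "\<dots> \<le> (v ^ totient m) ^ B"
    using assms(1) \<open>v \<le> v ^ totient m\<close> by (intro power_mono) simp_all
  finally show "B < v ^ (totient m * B)" by (simp add: power_mult)
  have "[(v ^ totient m) ^ B = 1 ^ B] (mod m)" by (intro cong_pow euler_theorem assms(2))
  then show "m dvd v ^ (totient m * B) - 1" unfolding power_one power_mult by (rule cong_to_1_nat)
qed

text \<open>If V = v^s \<equiv> 1 (mod m) and q lies on the grid m^-1\<int>, then q - q/V = q (V - 1) / V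
  with q (V - 1) an integer.\<close>
lemma v_adic_interval_around_grid_point:
  fixes v m B :: nat and q :: real
  assumes "v \<ge> 2" "coprime v m" "q * real m \<in> \<int>"
  obtains V where "real B < V" "is_adic v {q - q / V ..< q - q / V + 1 / V}"
proof -
  obtain s where s: "B < v ^ s" "m dvd v ^ s - 1" using exists_power_cong_one_gt[OF assms(1,2)] by blast
  define V where "V = real v ^ s"
  obtain K where K: "v ^ s = m * K + 1" using s(2) assms(1)
    by (metis dvdE le_add_diff_inverse2 one_le_power order.trans one_le_numeral)
  then have "V - 1 = real m * real K"
    unfolding V_def by (metis add_diff_cancel_right' of_nat_add of_nat_1 of_nat_mult of_nat_power)
  then have "q * (V - 1) \<in> \<int>" using assms(3) by (simp add: mult.assoc[symmetric])
  then obtain n where n: "q * (V - 1) = of_int n" by (auto elim: Ints_cases)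
  have V: "V > 0" using assms(1) by (simp add: V_def)
  have "q - q / V = real_of_int n / V" using V n by (simp add: field_simps)
  then have "{q - q / V ..< q - q / V + 1 / V} = adic_interval v (int s) (n + 1)"
    by (simp add: adic_interval_def power_int_of_nat V_def[symmetric] add_divide_distrib)
  then have "is_adic v {q - q / V ..< q - q / V + 1 / V}" unfolding is_adic_def by blast
  moreover have "real B < V" using s(1) unfolding V_def by (metis of_nat_less_iff of_nat_power)
  ultimately show ?thesis using that by blast
qed

lemma diff_Zpt_interval_around:
  assumes "v > 0" "V > 0" "is_adic v {q - q / V ..< q - q / V + 1 / V}"
  shows "q - Zpt v {q - q / V ..< q - q / V + 1 / V}
      = (q - (1 - 1 / real v)) * ilen {q - q / V ..< q - q / V + 1 / V}"
proof -
  define I where "I = {q - q / V ..< q - q / V + 1 / V}"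
  have Z: "Zpt v I = q - q / V + 1 / V - 1 / V / real v"
    unfolding I_def by (rule Zpt_atLeastLessThan[OF assms(1) _ assms(3)]) (use assms(2) in simp)
  have L: "ilen I = 1 / V" using assms(2) by (simp add: I_def ilen_atLeastLessThan)
  show ?thesis unfolding I_def[symmetric] Z L using assms(1,2) by (simp add: field_simps)
qed

lemma v_adic_interval_after_grid_point:
  fixes p v r B :: nat and y :: real
  assumes "p \<ge> 2" "v \<ge> 2" "coprime v p" "y * real p ^ r \<in> \<int>" "0 \<le> y"
    and "y + 2 / real p ^ r \<le> 1" "real p ^ r \<le> real B"
  defines "q \<equiv> y + 1 / real p ^ r"
  obtains V where "real B < V" "is_adic v {q - q / V ..< q - q / V + 1 / V}"
    and "y \<le> q - q / V" "q - q / V < q" "q < q - q / V + 1 / V"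
    and "q - q / V + 1 / V \<le> y + 2 / real p ^ r"
proof -
  define P where "P = real p ^ r"
  have P: "P > 0" using assms(1) by (simp add: P_def)
  have "coprime v (p ^ r)" using assms(3) by simp
  moreover have "q * real (p ^ r) \<in> \<int>"
    using assms(4) P by (simp add: q_def P_def distrib_right)
  ultimately obtain V where V: "real B < V" and adic: "is_adic v {q - q / V ..< q - q / V + 1 / V}"
    using v_adic_interval_around_grid_point[OF assms(2), where B = B] by blast
  have PV: "P < V" using V assms(7) unfolding P_def by linarith
  have q: "q = y + 1 / P" "0 < 1 / P" "1 / P \<le> 2 / P"
    using P by (simp_all add: q_def P_def divide_right_mono)
  then have "0 < q" "q < 1" using assms(5,6) unfolding P_def by linarith+
  have "1 / V \<le> 1 / P" using PV P by (intro divide_left_mono) auto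
  moreover have "0 < q / V" "q / V < 1 / V" using \<open>0 < q\<close> \<open>q < 1\<close> PV P
    by (simp_all add: divide_strict_right_mono)
  ultimately show ?thesis
    using that[OF V adic] q unfolding P_def by linarith
qed

section \<open>Windows above (v - 1)/v\<close>

text \<open>The window of level \<rho> is the cell of the grid p^-\<rho>\<int> lying just above (v - 1)/v.\<close>
definition window_start :: "nat \<Rightarrow> nat \<Rightarrow> nat \<Rightarrow> real" where
  "window_start p v \<rho> = real ((v - 1) * p ^ \<rho> div v + 1) / real p ^ \<rho>"

definition window :: "nat \<Rightarrow> nat \<Rightarrow> nat \<Rightarrow> real set" where
  "window p v \<rho> = {window_start p v \<rho> ..< window_start p v \<rho> + 1 / real p ^ \<rho>}"

lemma window_start_grid: "window_start p v \<rho> * real p ^ \<rho> \<in> \<int>"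
  by (cases "p = 0") (simp_all add: window_start_def)

lemma window_start_bounds:
  assumes "v > 0" "p > 0"
  shows "1 - 1 / real v + 1 / (real v * real p ^ \<rho>) \<le> window_start p v \<rho>"
    and "window_start p v \<rho> \<le> 1 - 1 / real v + 1 / real p ^ \<rho>"
proof -
  define n where "n = (v - 1) * p ^ \<rho>"
  define m where "m = n div v + 1"
  have "n mod v < v" using assms(1) by simp
  then have "n + 1 \<le> m * v" "m * v \<le> n + v"
    unfolding m_def add_mult_distrib using div_mult_mod_eq[of n v] by linarith+
  then have lo: "real n + 1 \<le> real m * real v" and hi: "real m * real v \<le> real n + real v"
    by (metis of_nat_1 of_nat_add of_nat_le_iff of_nat_mult)+
  define P where "P = real p ^ \<rho>"
  have P: "P > 0" using assms(2) by (simp add: P_def)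
  have n: "real n = (real v - 1) * P"
    unfolding n_def P_def using assms(1) by (simp add: of_nat_diff)
  have start: "window_start p v \<rho> = real m * real v / (real v * P)"
    unfolding window_start_def m_def n_def P_def using assms(1) by simp
  have "1 - 1 / real v + 1 / (real v * P) = (real n + 1) / (real v * P)"
    using assms(1) P unfolding n by (simp add: field_simps)
  also have "\<dots> \<le> window_start p v \<rho>"
    unfolding start using lo assms(1) P by (intro divide_right_mono) auto
  finally show "1 - 1 / real v + 1 / (real v * real p ^ \<rho>) \<le> window_start p v \<rho>"
    unfolding P_def .
  have "window_start p v \<rho> \<le> (real n + real v) / (real v * P)"
    unfolding start using hi assms(1) P by (intro divide_right_mono) auto
  also have "\<dots> = 1 - 1 / real v + 1 / P"
    using assms(1) P unfolding n by (simp add: field_simps)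
  finally show "window_start p v \<rho> \<le> 1 - 1 / real v + 1 / real p ^ \<rho>"
    unfolding P_def .
qed

lemma window_subset_unit:
  assumes "v > 0" "2 * v \<le> p ^ \<rho>"
  shows "window p v \<rho> \<subseteq> {0..<1}"
proof -
  have "p > 0"
  proof (rule ccontr)
    assume "\<not> p > 0"
    then have "p ^ \<rho> \<le> 1" by (simp add: power_0_left)
    with assms show False by linarith
  qed
  have "2 * real v \<le> real p ^ \<rho>" using of_nat_mono[OF assms(2)] by simp
  then have "2 / real p ^ \<rho> \<le> 1 / real v" using assms(1) \<open>p > 0\<close> by (simp add: field_simps)
  then have "window_start p v \<rho> + 1 / real p ^ \<rho> \<le> 1"
    using window_start_bounds(2)[OF assms(1) \<open>p > 0\<close>, of \<rho>] by simp
  moreover have "0 \<le> window_start p v \<rho>" by (simp add: window_start_def)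
  ultimately show ?thesis unfolding window_def by auto
qed

lemma window_disjoint:
  assumes "v > 0" "p > 0" "2 * v * p ^ \<rho> \<le> p ^ \<rho>'"
  shows "window p v \<rho> \<inter> window p v \<rho>' = {}"
proof -
  have "2 * real v * real p ^ \<rho> \<le> real p ^ \<rho>'"
    using assms(3) by (metis of_nat_le_iff of_nat_mult of_nat_numeral of_nat_power)
  then have "2 / real p ^ \<rho>' \<le> 1 / (real v * real p ^ \<rho>)"
    using assms(1,2) by (simp add: field_simps)
  then have "window_start p v \<rho>' + 1 / real p ^ \<rho>' \<le> window_start p v \<rho>"
    using window_start_bounds[OF assms(1,2), of \<rho>] window_start_bounds[OF assms(1,2), of \<rho>'] by simp
  then show ?thesis unfolding window_def by auto
qed

lemma two_mult_power_le_power: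
  fixes p M n :: nat
  assumes "p \<ge> 2"
  shows "2 * M ^ n \<le> p ^ (M * n + 1)"
proof -
  have "M ^ n \<le> (2 ^ M) ^ n" by (rule power_mono) (simp_all add: less_exp[THEN less_imp_le])
  then have "2 * M ^ n \<le> 2 ^ (M * n + 1)" by (simp add: power_mult)
  also have "\<dots> \<le> p ^ (M * n + 1)" using assms by (intro power_mono) simp_all
  finally show ?thesis .
qed

lemma window_point_above_threshold:
  assumes "p \<ge> 2" "v > 0" "2 * v ^ n \<le> p ^ \<rho>" "0 < \<epsilon>" "\<epsilon> \<le> 1 / real p ^ \<rho>"
  shows "0 < window_start p v \<rho> + \<epsilon> - (1 - 1 / real v)"
    and "window_start p v \<rho> + \<epsilon> - (1 - 1 / real v) \<le> real v powi (- int n)"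
proof -
  have p: "p > 0" using assms(1) by simp
  have "0 < 1 / (real v * real p ^ \<rho>)" using assms(2) p by simp
  then show "0 < window_start p v \<rho> + \<epsilon> - (1 - 1 / real v)"
    using window_start_bounds(1)[OF assms(2) p, of \<rho>] assms(4) by linarith
  have "2 * real v ^ n \<le> real p ^ \<rho>" using of_nat_mono[OF assms(3)] by simp
  then have "2 * (1 / real p ^ \<rho>) \<le> 1 / real v ^ n" using assms(2) p by (simp add: field_simps)
  also have "\<dots> = real v powi (- int n)" by (simp add: power_int_minus power_int_of_nat divide_inverse)
  finally show "window_start p v \<rho> + \<epsilon> - (1 - 1 / real v) \<le> real v powi (- int n)"
    using window_start_bounds(2)[OF assms(2) p, of \<rho>] assms(5) by linarith
qed

lemma exists_exponent_dominating:
  fixes p M \<rho> :: nat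
  assumes "p \<ge> 2"
  obtains r where "\<rho> \<le> r" and "\<And>N. 0 < N \<Longrightarrow> N \<le> M \<Longrightarrow> 2 / real p ^ r \<le> 1 / real N ^ \<rho>"
proof
  show "\<rho> \<le> (M + 1) * \<rho> + 1" by simp
  fix N :: nat
  assume "0 < N" "N \<le> M"
  then have "2 * N ^ \<rho> \<le> 2 * (M + 1) ^ \<rho>" by (simp add: power_mono)
  also have "\<dots> \<le> p ^ ((M + 1) * \<rho> + 1)" by (rule two_mult_power_le_power[OF assms])
  finally have "2 * real N ^ \<rho> \<le> real p ^ ((M + 1) * \<rho> + 1)" using of_nat_mono by fastforce
  then show "2 / real p ^ ((M + 1) * \<rho> + 1) \<le> 1 / real N ^ \<rho>"
    using assms \<open>0 < N\<close> by (simp add: field_simps)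
qed

section \<open>Choice of the intervals\<close>

lemma exists_adic_interval_in_window:
  fixes p v \<rho> n :: nat and Ns :: "nat set"
  assumes p: "p \<ge> 2" and v: "v \<ge> 2" and cop: "coprime v p"
    and Ns: "finite Ns" "\<And>N. N \<in> Ns \<Longrightarrow> 0 < N \<and> p dvd N"
    and unit: "2 * v \<le> p ^ \<rho>" and small: "2 * v ^ n \<le> p ^ \<rho>"
  shows "\<exists>I. is_adic v I \<and> I \<subseteq> window p v \<rho> \<and>
    (\<forall>N\<in>Ns. smallest_adic N I \<subseteq> window p v \<rho> \<and>
      (\<exists>\<zeta>. interior_child_endpoint N (smallest_adic N I) \<zeta> \<and>
        0 < \<zeta> - Zpt v I \<and> \<zeta> - Zpt v I \<le> real v powi (- int n) * ilen I))"
proof -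
  define y where "y = window_start p v \<rho>"
  define d where "d = 1 / real p ^ \<rho>"
  have W: "window p v \<rho> = {y..<y + d}" unfolding window_def y_def d_def ..
  have "d > 0" using p by (simp add: d_def)
  then have "y + d \<le> 1" "0 \<le> y"
    using atLeastLessThan_subset_iff[OF window_subset_unit[OF _ unit, unfolded W]] v by auto
  have y_grid: "y * real p ^ \<rho> \<in> \<int>" unfolding y_def by (rule window_start_grid)
  define M where "M = Max (insert p Ns)"
  have pM: "p \<le> M" and NM: "\<And>N. N \<in> Ns \<Longrightarrow> N \<le> M" by (simp_all add: M_def Ns(1))
  obtain r where "\<rho> \<le> r" and MP: "\<And>N. 0 < N \<Longrightarrow> N \<le> M \<Longrightarrow> 2 / real p ^ r \<le> 1 / real N ^ \<rho>"
    using exists_exponent_dominating[OF p] by blast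
  define P where "P = real p ^ r"
  have "0 < 1 / P" "1 / P \<le> 2 / P" using p by (simp_all add: P_def divide_right_mono)
  moreover have "2 / P \<le> d" using MP[OF _ pM] p by (simp add: P_def d_def)
  ultimately have dP: "0 < 1 / P" "1 / P \<le> d" "2 / P \<le> d" by linarith+
  define q where "q = y + 1 / P"
  have yP: "y * P \<in> \<int>" using grid_point_finer[OF y_grid \<open>\<rho> \<le> r\<close>] by (simp add: P_def)
  then have q_grid: "q * real p ^ r \<in> \<int>" using dP by (simp add: q_def P_def distrib_right)
  obtain V where V: "real (M ^ r) < V" and adic: "is_adic v {q - q / V ..< q - q / V + 1 / V}"
    and I: "y \<le> q - q / V" "q - q / V < q" "q < q - q / V + 1 / V" "q - q / V + 1 / V \<le> y + 2 / P"
    using v_adic_interval_after_grid_point[OF p v cop yP[unfolded P_def] \<open>0 \<le> y\<close>, of "M ^ r"]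
      \<open>y + d \<le> 1\<close> dP pM unfolding q_def P_def by (auto simp: power_mono)
  define I where "I = {q - q / V ..< q - q / V + 1 / V}"
  have V0: "V > 0" using V of_nat_0_le_iff[of "M ^ r"] by linarith
  have "q - Zpt v I = (q - (1 - 1 / real v)) * ilen I" "ilen I > 0"
    using diff_Zpt_interval_around[OF _ V0 adic] V0 v by (simp_all add: I_def ilen_atLeastLessThan)
  then have Z: "0 < q - Zpt v I" "q - Zpt v I \<le> real v powi (- int n) * ilen I"
    using window_point_above_threshold[OF p _ small, of "1 / P"] v dP
    unfolding q_def y_def d_def by (simp_all add: mult_right_mono)
  have "smallest_adic N I \<subseteq> window p v \<rho> \<and> interior_child_endpoint N (smallest_adic N I) q"
    if N: "N \<in> Ns" for N
  proof -
    have N0: "N > 0" and pN: "p dvd N" using Ns(2)[OF N] by simp_all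
    then have "p \<le> N" by (simp add: dvd_imp_le)
    then have "N \<ge> 2" "1 / real N ^ \<rho> \<le> d"
      using p unfolding d_def by (auto intro!: divide_left_mono power_mono)
    moreover have "q - q / V + 1 / V \<le> y + 1 / real N ^ \<rho>" using I(4) MP[OF N0 NM[OF N]] P_def by simp
    moreover have "real N ^ r \<le> real M ^ r" using NM[OF N] by (intro power_mono) simp_all
    then have "(q - q / V + 1 / V - (q - q / V)) * real N ^ r < 1" using V V0 by simp
    ultimately have "smallest_adic N I \<subseteq> {y..<y + 1 / real N ^ \<rho>}"
      and "interior_child_endpoint N (smallest_adic N I) q"
      using \<open>0 \<le> y\<close> I \<open>y + d \<le> 1\<close> unfolding I_def
      by (intro smallest_adic_grid_interval[OF _ grid_point_dvd[OF pN y_grid] grid_point_dvd[OF pN q_grid]];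
          linarith)+
    with \<open>1 / real N ^ \<rho> \<le> d\<close> show ?thesis unfolding W by auto
  qed
  moreover have "I \<subseteq> window p v \<rho>" using I dP unfolding W I_def by auto
  ultimately show ?thesis using adic Z unfolding I_def[symmetric] by blast
qed

lemma window_levels_disjoint_less:
  assumes "p \<ge> 2" "v > 0" "l < l'"
  shows "window p v (v * (100 * l) + 1) \<inter> window p v (v * (100 * l') + 1) = {}"
proof (rule window_disjoint)
  have "v * 1 + 1 \<le> v * (100 * (l' - l))" using assms(2,3) by (simp add: Suc_le_eq)
  then have "2 * v ^ 1 \<le> p ^ (v * (100 * (l' - l)))"
    using two_mult_power_le_power[OF assms(1), of v 1] power_increasing[of _ _ p] assms(1)
    by (meson le_trans one_le_numeral order.trans)
  then have "2 * v * p ^ (v * (100 * l) + 1) \<le> p ^ (v * (100 * (l' - l))) * p ^ (v * (100 * l) + 1)"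
    by simp
  also have "\<dots> = p ^ (v * (100 * l') + 1)"
    using assms(3) by (simp flip: power_add add: algebra_simps diff_mult_distrib2)
  finally show "2 * v * p ^ (v * (100 * l) + 1) \<le> p ^ (v * (100 * l') + 1)" .
qed (use assms in auto)

lemma window_levels_disjoint:
  assumes "p \<ge> 2" "v > 0" "l \<noteq> l'"
  shows "window p v (v * (100 * l) + 1) \<inter> window p v (v * (100 * l') + 1) = {}"
  using window_levels_disjoint_less[OF assms(1,2)] assms(3)
  by (metis Int_commute linorder_neq_iff)

lemma window_level_bounds:
  fixes p v l :: nat
  assumes "p \<ge> 2" "v > 0" "l \<ge> 1"
  shows "2 * v ^ (100 * l) \<le> p ^ (v * (100 * l) + 1)" and "2 * v \<le> p ^ (v * (100 * l) + 1)"
proof -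
  show small: "2 * v ^ (100 * l) \<le> p ^ (v * (100 * l) + 1)"
    by (rule two_mult_power_le_power[OF assms(1)])
  have "v ^ 1 \<le> v ^ (100 * l)" using assms(2,3) by (intro power_increasing) simp_all
  with small show "2 * v \<le> p ^ (v * (100 * l) + 1)" by simp
qed

lemma exists_adic_intervals_in_windows:
  fixes p v :: nat and Ns :: "nat set"
  assumes "p \<ge> 2" "v \<ge> 2" "coprime v p" "finite Ns" "\<And>N. N \<in> Ns \<Longrightarrow> 0 < N \<and> p dvd N"
  obtains I :: "nat \<Rightarrow> real set"
  where "\<And>l. l \<ge> 1 \<Longrightarrow> is_adic v (I l)"
    and "\<And>l. l \<ge> 1 \<Longrightarrow> I l \<subseteq> window p v (v * (100 * l) + 1)"
    and "\<And>l N. l \<ge> 1 \<Longrightarrow> N \<in> Ns \<Longrightarrow> smallest_adic N (I l) \<subseteq> window p v (v * (100 * l) + 1)"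
    and "\<And>l N. l \<ge> 1 \<Longrightarrow> N \<in> Ns \<Longrightarrow> \<exists>\<zeta>. interior_child_endpoint N (smallest_adic N (I l)) \<zeta> \<and>
      0 < \<zeta> - Zpt v (I l) \<and> \<zeta> - Zpt v (I l) \<le> real v powi (- (100 * int l)) * ilen (I l)"
proof -
  define good where "good l J \<longleftrightarrow> is_adic v J \<and> J \<subseteq> window p v (v * (100 * l) + 1) \<and>
    (\<forall>N\<in>Ns. smallest_adic N J \<subseteq> window p v (v * (100 * l) + 1) \<and>
      (\<exists>\<zeta>. interior_child_endpoint N (smallest_adic N J) \<zeta> \<and>
        0 < \<zeta> - Zpt v J \<and> \<zeta> - Zpt v J \<le> real v powi (- (100 * int l)) * ilen J))" for l J
  have "\<exists>J. good l J" if "l \<ge> 1" for l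
    using exists_adic_interval_in_window[OF assms window_level_bounds(2,1)[OF assms(1) _ that]] assms(2)
    unfolding good_def by simp
  then obtain I where "\<And>l. l \<ge> 1 \<Longrightarrow> good l (I l)" by metis
  then show ?thesis using that unfolding good_def by blast
qed

lemma exists_separated_adic_intervals:
  fixes p v :: nat and Ns :: "nat set"
  assumes p: "p \<ge> 2" and v: "v \<ge> 2" and cop: "coprime v p"
    and Ns: "finite Ns" "\<And>N. N \<in> Ns \<Longrightarrow> 0 < N \<and> p dvd N"
  shows "\<exists>(I :: nat \<Rightarrow> real set) (\<alpha> :: nat \<Rightarrow> nat).
     (\<forall>l\<ge>1. is_adic v (I l) \<and> I l \<subseteq> {0..<1} \<and> \<alpha> l > 0) \<and>
     (\<forall>N\<in>Ns.
        (\<forall>l\<ge>1. smallest_adic N (I l) \<subseteq> {0..<1}) \<and>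
        (\<forall>l\<ge>1. \<forall>m\<ge>1. l \<noteq> m \<longrightarrow> smallest_adic N (I l) \<inter> smallest_adic N (I m) = {})) \<and>
     (\<forall>l\<ge>1. \<forall>m\<ge>1. l \<noteq> m \<longrightarrow> I l \<inter> I m = {}) \<and>
     (\<forall>a::nat. finite {l. l \<ge> 1 \<and> \<alpha> l = a}) \<and>
     (\<forall>l\<ge>1. \<forall>N\<in>Ns. \<exists>\<zeta>.
        interior_child_endpoint N (smallest_adic N (I l)) \<zeta> \<and>
        0 < \<zeta> - Zpt v (I l) \<and>
        \<zeta> - Zpt v (I l) \<le> real v powi (- (100 * int (\<alpha> l))) * ilen (I l))"
proof -
  define W where "W l = window p v (v * (100 * l) + 1)" for l
  obtain I where adic: "\<And>l. l \<ge> 1 \<Longrightarrow> is_adic v (I l)"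
    and sub: "\<And>l. l \<ge> 1 \<Longrightarrow> I l \<subseteq> W l"
    and cover_sub: "\<And>l N. l \<ge> 1 \<Longrightarrow> N \<in> Ns \<Longrightarrow> smallest_adic N (I l) \<subseteq> W l"
    and endpoint: "\<And>l N. l \<ge> 1 \<Longrightarrow> N \<in> Ns \<Longrightarrow> \<exists>\<zeta>.
      interior_child_endpoint N (smallest_adic N (I l)) \<zeta> \<and>
      0 < \<zeta> - Zpt v (I l) \<and> \<zeta> - Zpt v (I l) \<le> real v powi (- (100 * int l)) * ilen (I l)"
    using exists_adic_intervals_in_windows[OF p v cop Ns] unfolding W_def by blast
  have W_unit: "W l \<subseteq> {0..<1}" if "l \<ge> 1" for l
    using window_subset_unit[OF _ window_level_bounds(2)[OF p _ that]] v by (simp add: W_def)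
  have W_disjoint: "W l \<inter> W m = {}" if "l \<noteq> m" for l m
    using window_levels_disjoint[OF p _ that] v by (simp add: W_def)
  show ?thesis
  proof (intro exI[of _ I] exI[of _ "\<lambda>l. l"] conjI allI ballI impI)
    fix l :: nat
    assume l: "l \<ge> 1"
    show "is_adic v (I l)" "I l \<subseteq> {0..<1}" "0 < l" using adic[OF l] sub[OF l] W_unit[OF l] l by auto
  next
    fix N l :: nat
    assume "N \<in> Ns" "l \<ge> 1"
    then show "smallest_adic N (I l) \<subseteq> {0..<1}" using cover_sub W_unit by blast
  next
    fix N l m :: nat
    assume "N \<in> Ns" "l \<ge> 1" "m \<ge> 1" "l \<noteq> m"
    then show "smallest_adic N (I l) \<inter> smallest_adic N (I m) = {}"
      using cover_sub[of l N] cover_sub[of m N] W_disjoint[of l m] by blast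
  next
    fix l m :: nat
    assume "l \<ge> 1" "m \<ge> 1" "l \<noteq> m"
    then show "I l \<inter> I m = {}" using sub[of l] sub[of m] W_disjoint[of l m] by blast
  next
    fix a :: nat
    show "finite {l. l \<ge> 1 \<and> l = a}" by simp
  qed (use endpoint in blast)
qed

theorem theorem2p5:
  fixes p v k :: nat and c :: "nat \<Rightarrow> nat"
  assumes "prime p"
    and "\<forall>i\<in>{1..k}. c i > 0"
    and "v \<ge> 2"
    and "coprime v p"
  shows "\<exists>(I :: nat \<Rightarrow> real set) (\<alpha> :: nat \<Rightarrow> nat).
     (\<forall>l\<ge>1. is_adic v (I l) \<and> I l \<subseteq> {0..<1} \<and> \<alpha> l > 0) \<and>
     (\<forall>i\<in>{1..k}.
        (\<forall>l\<ge>1. smallest_adic (p * c i) (I l) \<subseteq> {0..<1}) \<and>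
        (\<forall>l\<ge>1. \<forall>m\<ge>1. l \<noteq> m \<longrightarrow>
            smallest_adic (p * c i) (I l) \<inter> smallest_adic (p * c i) (I m) = {})) \<and>
     (\<forall>l\<ge>1. \<forall>m\<ge>1. l \<noteq> m \<longrightarrow> I l \<inter> I m = {}) \<and>
     (\<forall>a::nat. finite {l. l \<ge> 1 \<and> \<alpha> l = a}) \<and>
     (\<forall>l\<ge>1. \<forall>i\<in>{1..k}. \<exists>\<zeta>.
        interior_child_endpoint (p * c i) (smallest_adic (p * c i) (I l)) \<zeta> \<and>
        0 < \<zeta> - Zpt v (I l) \<and>
        \<zeta> - Zpt v (I l) \<le> real v powi (- (100 * int (\<alpha> l))) * ilen (I l))"
proof -
  have p: "p \<ge> 2" using assms(1) prime_ge_2_nat by blast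
  have "finite ((\<lambda>i. p * c i) ` {1..k})" "\<And>N. N \<in> (\<lambda>i. p * c i) ` {1..k} \<Longrightarrow> 0 < N \<and> p dvd N"
    using assms(2) p by auto
  from exists_separated_adic_intervals[OF p assms(3,4) this] show ?thesis by simp
qed

end
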